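(* Let $J\ge2$. For any $\delta_1>0$ and $\vec\lambda\in(0,\infty)^J$ with $$\min_{\emptyset\ne\mathcal I\subseteq\{1,\dots,J\}}\Big(\frac{|A^*_{\mathcal I}\vec\lambda^D_{\mathcal I}|}{|\vec\lambda^D_{\mathcal I}|}+\sum_{i\notin\mathcal I}\frac{\lambda_i}{\lambda_{\max}}\Big)\ge\delta_1,$$ we have $\sum_{i=1}^J(A^*\vec\lambda^D)_i^2\lambda_i^{2D-2}\simeq_{\delta_1}\lambda_{\max}^{4D-2}$ and $\lambda_{\mathrm{max2}}\gtrsim\delta_1\lambda_{\max}$.
   Context: $N\ge7$, $D=\frac{N-2}2$. A configuration: signs $\iota_i\in\{\pm1\}$ and distinct points $z_1^*,\dots,z_J^*\in\mathbb{R}^N$. $A^*_{ij}=\mathbf 1_{i\ne j}\kappa_0\kappa_\infty\frac{\iota_i\iota_j}{|z_i^*-z_j^*|^{N-2}}$ with fixed positive constants $\kappa_0,\kappa_\infty$. $A^*_{\mathcal I}$ is the submatrix of $A^*$ with rows and columns in $\mathcal I$; $\vec\lambda^D_{\mathcal I}=(\lambda_i^D)_{i\in\mathcal I}$, $\vec\lambda^D=(\lambda_i^D)_i$. $\lambda_{\max}$, $\lambda_{\mathrm{max2}}$ are the largest and second largest of $\lambda_1,\dots,\lambda_J$. Implicit constants may depend on $N,J$ and the configuration (and on $\delta_1$ where indicated), not on $\vec\lambda$. *)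

theory Defs
  imports "HOL-Analysis.Analysis"
begin

definition Dexp :: "nat \<Rightarrow> real" where
  "Dexp N = (real N - 2) / 2"

text \<open>The interaction matrix A^*, indexed by the labels 1..J; points live in real^'n, N = CARD('n).\<close>
definition Astar :: "real \<Rightarrow> real \<Rightarrow> (nat \<Rightarrow> real) \<Rightarrow> (nat \<Rightarrow> real ^ 'n) \<Rightarrow> nat \<Rightarrow> nat \<Rightarrow> real" where
  "Astar k0 kinf iota z i j =
     (if i = j then 0
      else k0 * kinf * iota i * iota j / (dist (z i) (z j)) ^ (CARD('n) - 2))"

text \<open>Largest and second largest (counted with multiplicity) of lam 1, ..., lam J.\<close>
definition lam_max :: "nat \<Rightarrow> (nat \<Rightarrow> real) \<Rightarrow> real" where
  "lam_max J lam = Max (lam ` {1..J})"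

definition lam_max2 :: "nat \<Rightarrow> (nat \<Rightarrow> real) \<Rightarrow> real" where
  "lam_max2 J lam = rev (sort (map lam [1..<J+1])) ! 1"

definition cond_term :: "real \<Rightarrow> real \<Rightarrow> (nat \<Rightarrow> real) \<Rightarrow> (nat \<Rightarrow> real ^ 'n) \<Rightarrow> nat \<Rightarrow> (nat \<Rightarrow> real) \<Rightarrow> nat set \<Rightarrow> real" where
  "cond_term k0 kinf iota z J lam I =
     L2_set (\<lambda>i. \<Sum>j\<in>I. Astar k0 kinf iota z i j * lam j powr Dexp CARD('n)) I
       / L2_set (\<lambda>i. lam i powr Dexp CARD('n)) I
     + (\<Sum>i\<in>{1..J} - I. lam i / lam_max J lam)"

definition cond_min :: "real \<Rightarrow> real \<Rightarrow> (nat \<Rightarrow> real) \<Rightarrow> (nat \<Rightarrow> real ^ 'n) \<Rightarrow> nat \<Rightarrow> (nat \<Rightarrow> real) \<Rightarrow> real" where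
  "cond_min k0 kinf iota z J lam =
     Min (cond_term k0 kinf iota z J lam ` {I. I \<subseteq> {1..J} \<and> I \<noteq> {}})"

definition main_sum :: "real \<Rightarrow> real \<Rightarrow> (nat \<Rightarrow> real) \<Rightarrow> (nat \<Rightarrow> real ^ 'n) \<Rightarrow> nat \<Rightarrow> (nat \<Rightarrow> real) \<Rightarrow> real" where
  "main_sum k0 kinf iota z J lam =
     (\<Sum>i=1..J. (\<Sum>j=1..J. Astar k0 kinf iota z i j * lam j powr Dexp CARD('n))\<^sup>2
                 * lam i powr (2 * Dexp CARD('n) - 2))"

end

theory Submission
  imports Defs
begin

(* Nothing about A^* beyond it being a real matrix is used (the signs, the positivity of
   k0, kinf and the distinctness of the points are irrelevant); only D >= 1 matters.
   Write L = lam_max and M for the sum of all |A i j|.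
   Upper bound: the vector of row sums (A lam^D)_i has l1 norm at most M L^D, and
   lam_i^(2D-2) <= L^(2D-2).
   Lower bound: let I be the set of i with lam_i >= eps L, eps small in terms of delta_1.
   Then the tail sum of lam_i / L outside I is at most J eps, so the hypothesis at I gives
   |A_I lam^D_I| >= 3/4 delta_1 L^D; the columns outside I change the rows in I by at most
   M eps L^D, and on I the weight lam_i^(2D-2) is at least (eps L)^(2D-2).
   For lam_max2, the hypothesis at I = {m} with lam_m = L reads
   delta_1 <= sum of lam_i / L over i <> m, which is at most (J - 1) lam_max2 / L. *)

lemma min_le_second_largest:
  fixes xs :: "'a::linorder list"
  assumes i: "i < length xs" and j: "j < length xs" and ij: "i \<noteq> j"
  shows "min (xs ! i) (xs ! j) \<le> rev (sort xs) ! 1"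
proof (rule ccontr)
  define n where "n = length xs"
  define s where "s = sort xs"
  define t where "t = s ! (n - 2)"
  have n2: "2 \<le> n" using i j ij unfolding n_def by linarith
  have second: "rev s ! 1 = t"
    using n2 by (simp add: s_def t_def n_def rev_nth numeral_2_eq_2)
  assume "\<not> min (xs ! i) (xs ! j) \<le> rev (sort xs) ! 1"
  then have "t < xs ! i" "t < xs ! j" using second s_def by (simp_all add: not_le)
  then have "{i, j} \<subseteq> {k. k < n \<and> t < xs ! k}" using i j n_def by auto
  then have "2 \<le> length (filter ((<) t) xs)"
    using ij by (metis (no_types) card_2_iff card_mono finite_Collect_conjI finite_Collect_less_nat
        length_filter_conv_card n_def)
  also have "length (filter ((<) t) xs) = length (filter ((<) t) s)"
    by (metis mset_filter mset_sort s_def size_mset)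
  also have "\<dots> \<le> card {n - 1}"
  proof -
    have "{k. k < n \<and> t < s ! k} \<subseteq> {n - 1}"
    proof
      fix k assume k: "k \<in> {k. k < n \<and> t < s ! k}"
      have "n - 2 < length s" using n2 by (simp add: s_def n_def)
      then have "\<not> k \<le> n - 2"
        using k sorted_nth_mono[of s k "n - 2"] by (auto simp: s_def t_def)
      then show "k \<in> {n - 1}" using k by auto
    qed
    then have "card {k. k < n \<and> t < s ! k} \<le> card {n - 1}" by (rule card_mono[rotated]) simp
    then show ?thesis by (simp add: length_filter_conv_card s_def n_def)
  qed
  finally show False by simp
qed

lemma L2_set_row_sums_le:
  fixes A :: "'a \<Rightarrow> 'b \<Rightarrow> real"
  assumes lam: "\<forall>j\<in>T. 0 \<le> lam j \<and> lam j \<le> b" and D: "0 \<le> D"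
  shows "L2_set (\<lambda>i. \<Sum>j\<in>T. A i j * lam j powr D) I \<le> (\<Sum>i\<in>I. \<Sum>j\<in>T. \<bar>A i j\<bar>) * b powr D"
proof -
  have row: "\<bar>\<Sum>j\<in>T. A i j * lam j powr D\<bar> \<le> (\<Sum>j\<in>T. \<bar>A i j\<bar>) * b powr D" for i
  proof -
    have "\<bar>\<Sum>j\<in>T. A i j * lam j powr D\<bar> \<le> (\<Sum>j\<in>T. \<bar>A i j\<bar> * lam j powr D)"
      by (rule order_trans[OF sum_abs]) (simp add: abs_mult)
    also have "\<dots> \<le> (\<Sum>j\<in>T. \<bar>A i j\<bar> * b powr D)"
      using lam D by (intro sum_mono mult_left_mono powr_mono2) auto
    finally show ?thesis by (simp add: sum_distrib_right)
  qed
  have "L2_set (\<lambda>i. \<Sum>j\<in>T. A i j * lam j powr D) I \<le> (\<Sum>i\<in>I. \<bar>\<Sum>j\<in>T. A i j * lam j powr D\<bar>)"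
    by (rule L2_set_le_sum_abs)
  also have "\<dots> \<le> (\<Sum>i\<in>I. (\<Sum>j\<in>T. \<bar>A i j\<bar>) * b powr D)"
    by (intro sum_mono row)
  finally show ?thesis by (simp add: sum_distrib_right)
qed

lemma L2_set_power2: "(L2_set f I)\<^sup>2 = (\<Sum>i\<in>I. (f i)\<^sup>2)"
  unfolding L2_set_def by (simp add: sum_nonneg)

lemma sum_sq_mult_powr_le:
  assumes "\<forall>i\<in>S. 0 \<le> lam i \<and> lam i \<le> b" and "0 \<le> E"
  shows "(\<Sum>i\<in>S. (u i)\<^sup>2 * lam i powr E) \<le> (L2_set u S)\<^sup>2 * b powr E"
proof -
  have "(\<Sum>i\<in>S. (u i)\<^sup>2 * lam i powr E) \<le> (\<Sum>i\<in>S. (u i)\<^sup>2 * b powr E)"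
    using assms by (intro sum_mono mult_left_mono powr_mono2) auto
  then show ?thesis by (simp add: L2_set_power2 sum_distrib_right)
qed

lemma sum_sq_mult_powr_ge:
  assumes "finite S" "I \<subseteq> S" and "\<forall>i\<in>I. 0 \<le> b \<and> b \<le> lam i" and "0 \<le> E"
  shows "(L2_set u I)\<^sup>2 * b powr E \<le> (\<Sum>i\<in>S. (u i)\<^sup>2 * lam i powr E)"
proof -
  have "(L2_set u I)\<^sup>2 * b powr E = (\<Sum>i\<in>I. (u i)\<^sup>2 * b powr E)"
    by (simp add: L2_set_power2 sum_distrib_right)
  also have "\<dots> \<le> (\<Sum>i\<in>I. (u i)\<^sup>2 * lam i powr E)"
    using assms(3,4) by (intro sum_mono mult_left_mono powr_mono2) auto
  also have "\<dots> \<le> (\<Sum>i\<in>S. (u i)\<^sup>2 * lam i powr E)"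
    using assms(1,2) by (intro sum_mono2) auto
  finally show ?thesis .
qed

lemma weighted_row_sums_upper_bound:
  fixes A :: "'a \<Rightarrow> 'a \<Rightarrow> real"
  assumes lam: "\<forall>i\<in>S. 0 \<le> lam i \<and> lam i \<le> L" and L: "0 < L" and D: "1 \<le> D"
  shows "(\<Sum>i\<in>S. (\<Sum>j\<in>S. A i j * lam j powr D)\<^sup>2 * lam i powr (2 * D - 2))
           \<le> (\<Sum>i\<in>S. \<Sum>j\<in>S. \<bar>A i j\<bar>)\<^sup>2 * L powr (4 * D - 2)"
proof -
  define M where "M = (\<Sum>i\<in>S. \<Sum>j\<in>S. \<bar>A i j\<bar>)"
  have rows: "L2_set (\<lambda>i. \<Sum>j\<in>S. A i j * lam j powr D) S \<le> M * L powr D"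
    unfolding M_def using lam D by (intro L2_set_row_sums_le) auto
  have "(\<Sum>i\<in>S. (\<Sum>j\<in>S. A i j * lam j powr D)\<^sup>2 * lam i powr (2 * D - 2))
          \<le> (L2_set (\<lambda>i. \<Sum>j\<in>S. A i j * lam j powr D) S)\<^sup>2 * L powr (2 * D - 2)"
    using lam D by (intro sum_sq_mult_powr_le) auto
  also have "\<dots> \<le> (M * L powr D)\<^sup>2 * L powr (2 * D - 2)"
    using rows by (intro mult_right_mono power_mono) auto
  also have "\<dots> = M\<^sup>2 * L powr (4 * D - 2)"
    using L by (simp add: power_mult_distrib powr_power powr_add[symmetric] algebra_simps)
  finally show ?thesis unfolding M_def .
qed

lemma L2_set_row_sums_drop_columns:
  fixes A :: "'a \<Rightarrow> 'a \<Rightarrow> real"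
  assumes S: "finite S" and I: "I \<subseteq> S" and lam: "\<forall>j\<in>S - I. 0 \<le> lam j \<and> lam j \<le> b"
    and D: "0 \<le> D"
  shows "L2_set (\<lambda>i. \<Sum>j\<in>I. A i j * lam j powr D) I
           \<le> L2_set (\<lambda>i. \<Sum>j\<in>S. A i j * lam j powr D) I + (\<Sum>i\<in>S. \<Sum>j\<in>S. \<bar>A i j\<bar>) * b powr D"
proof -
  define u where "u = (\<lambda>i. \<Sum>j\<in>S. A i j * lam j powr D)"
  define w where "w = (\<lambda>i. \<Sum>j\<in>S - I. A i j * lam j powr D)"
  have "(\<Sum>j\<in>I. A i j * lam j powr D) = u i + - w i" for i
    using sum.subset_diff[OF I S, of "\<lambda>j. A i j * lam j powr D"] unfolding u_def w_def by linarith
  then have "L2_set (\<lambda>i. \<Sum>j\<in>I. A i j * lam j powr D) I \<le> L2_set u I + L2_set w I"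
    using L2_set_triangle_ineq[of u "\<lambda>i. - w i" I] by (simp add: L2_set_def)
  also have "L2_set w I \<le> (\<Sum>i\<in>I. \<Sum>j\<in>S - I. \<bar>A i j\<bar>) * b powr D"
    unfolding w_def using lam D by (rule L2_set_row_sums_le)
  also have "\<dots> \<le> (\<Sum>i\<in>S. \<Sum>j\<in>S. \<bar>A i j\<bar>) * b powr D"
    using S I by (intro mult_right_mono order_trans[OF sum_mono[OF sum_mono2] sum_mono2])
      (auto intro: sum_nonneg)
  finally show ?thesis unfolding u_def by simp
qed

lemma weighted_row_sums_lower_bound:
  fixes A :: "'a \<Rightarrow> 'a \<Rightarrow> real" and S :: "'a set" and d :: real
  defines "M \<equiv> \<Sum>i\<in>S. \<Sum>j\<in>S. \<bar>A i j\<bar>"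
  defines "eps \<equiv> min 1 (d / (4 * (real (card S) + M)))"
  assumes S: "finite S" and m: "m \<in> S" "lam m = L"
    and lam: "\<forall>i\<in>S. 0 < lam i \<and> lam i \<le> L" and D: "1 \<le> D" and d: "0 < d"
    and cond: "\<And>I. I \<subseteq> S \<Longrightarrow> I \<noteq> {} \<Longrightarrow>
      d \<le> L2_set (\<lambda>i. \<Sum>j\<in>I. A i j * lam j powr D) I / L2_set (\<lambda>i. lam i powr D) I
           + (\<Sum>i\<in>S - I. lam i / L)"
  shows "d\<^sup>2 / 4 * eps powr (2 * D - 2) * L powr (4 * D - 2)
           \<le> (\<Sum>i\<in>S. (\<Sum>j\<in>S. A i j * lam j powr D)\<^sup>2 * lam i powr (2 * D - 2))"
proof -
  have L: "0 < L" using lam m by metis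
  have M: "0 \<le> M" unfolding M_def by (intro sum_nonneg) auto
  have card: "0 < real (card S)" using S m card_gt_0_iff by fastforce
  have eps: "0 < eps" "eps \<le> 1" unfolding eps_def using d M card by auto
  have "eps * (4 * (real (card S) + M)) \<le> d"
    unfolding eps_def using M card by (simp add: min_def pos_le_divide_eq)
  moreover have "0 \<le> real (card S) * eps" "0 \<le> M * eps" using M eps by simp_all
  ultimately have card_eps: "real (card S) * eps \<le> d / 4" and M_eps: "M * eps \<le> d / 4"
    by (simp_all add: algebra_simps)
  define I where "I = {i \<in> S. eps * L \<le> lam i}"
  have I: "I \<subseteq> S" "m \<in> I" unfolding I_def using m eps L by auto
  define u where "u = (\<lambda>i. \<Sum>j\<in>S. A i j * lam j powr D)"
  define v where "v = (\<lambda>i. \<Sum>j\<in>I. A i j * lam j powr D)"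
  define Y where "Y = L2_set (\<lambda>i. lam i powr D) I"
  have Y: "L powr D \<le> Y"
    unfolding Y_def using member_le_L2_set[OF finite_subset[OF I(1) S] I(2), of "\<lambda>i. lam i powr D"] m(2)
    by simp
  have Y_pos: "0 < Y" using order_less_le_trans[OF _ Y] L by simp
  have "(\<Sum>i\<in>S - I. lam i / L) \<le> (\<Sum>i\<in>S - I. eps)"
    using L by (intro sum_mono) (auto simp: I_def field_simps)
  also have "\<dots> \<le> real (card S) * eps"
    using S eps by (simp add: card_mono mult_right_mono)
  finally have "d \<le> L2_set v I / Y + d / 4"
    using cond[OF I(1)] I(2) card_eps unfolding v_def Y_def by fastforce
  then have "3 / 4 * d * Y \<le> L2_set v I"
    using Y_pos by (simp add: field_simps)
  moreover have "3 / 4 * d * L powr D \<le> 3 / 4 * d * Y"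
    using Y d by simp
  moreover have "L2_set v I \<le> L2_set u I + M * (eps * L) powr D"
  proof -
    have "\<forall>j\<in>S - I. 0 \<le> lam j \<and> lam j \<le> eps * L" using lam by (auto simp: I_def)
    then show ?thesis
      using L2_set_row_sums_drop_columns[OF S I(1)] D unfolding u_def v_def M_def by simp
  qed
  moreover have "M * (eps * L) powr D \<le> d / 4 * L powr D"
  proof -
    have "eps powr D \<le> eps" using powr_mono'[OF D, of eps] eps by simp
    then have "M * (eps * L) powr D \<le> M * eps * L powr D"
      using M eps L by (simp add: powr_mult mult.assoc mult_left_mono)
    also have "\<dots> \<le> d / 4 * L powr D" using M_eps by (intro mult_right_mono) simp_all
    finally show ?thesis .
  qed
  ultimately have u_big: "d / 2 * L powr D \<le> L2_set u I" by linarith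
  have "d\<^sup>2 / 4 * eps powr (2 * D - 2) * L powr (4 * D - 2) = (d / 2 * L powr D)\<^sup>2 * (eps * L) powr (2 * D - 2)"
    using L eps by (simp add: power_mult_distrib powr_power powr_mult powr_add[symmetric]
        power_divide algebra_simps)
  also have "\<dots> \<le> (L2_set u I)\<^sup>2 * (eps * L) powr (2 * D - 2)"
    using u_big d by (intro mult_right_mono power_mono) auto
  also have "\<dots> \<le> (\<Sum>i\<in>S. (u i)\<^sup>2 * lam i powr (2 * D - 2))"
    using S I(1) eps L D by (intro sum_sq_mult_powr_ge) (auto simp: I_def)
  finally show ?thesis unfolding u_def .
qed

lemma lam_le_lam_max: "i \<in> {1..J} \<Longrightarrow> lam i \<le> lam_max J lam"
  unfolding lam_max_def by simp

lemma lam_max_attained: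
  assumes "1 \<le> J"
  obtains m where "m \<in> {1..J}" "lam m = lam_max J lam"
  using Max_in[of "lam ` {1..J}"] assms unfolding lam_max_def by fastforce

lemma cond_min_le_cond_term:
  assumes "I \<subseteq> {1..J}" "I \<noteq> {}"
  shows "cond_min k0 kinf iota z J lam \<le> cond_term k0 kinf iota z J lam I"
  unfolding cond_min_def using assms by (intro Min_le) auto

lemma min_le_lam_max2:
  assumes "i \<in> {1..J}" "j \<in> {1..J}" "i \<noteq> j"
  shows "min (lam i) (lam j) \<le> lam_max2 J lam"
proof -
  let ?xs = "map lam [1..<J+1]"
  have "?xs ! (i - 1) = lam i" "?xs ! (j - 1) = lam j" "i - 1 < length ?xs" "j - 1 < length ?xs"
    using assms by (auto simp del: upt_Suc)
  then show ?thesis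
    using min_le_second_largest[of "i - 1" ?xs "j - 1"] assms unfolding lam_max2_def by force
qed

lemma lam_max2_lower_bound:
  fixes z :: "nat \<Rightarrow> real ^ 'n"
  assumes J: "2 \<le> J" and pos: "\<forall>i\<in>{1..J}. 0 < lam i"
    and d: "d \<le> cond_min k0 kinf iota z J lam"
  shows "d / (real J - 1) * lam_max J lam \<le> lam_max2 J lam"
proof -
  obtain m where m: "m \<in> {1..J}" "lam m = lam_max J lam"
    using lam_max_attained J by (metis one_le_numeral order_trans)
  define L where "L = lam_max J lam"
  have L: "0 < L" using pos m L_def by metis
  have "d \<le> cond_term k0 kinf iota z J lam {m}"
    using order_trans[OF d cond_min_le_cond_term[of "{m}"]] m(1) by simp
  also have "\<dots> = (\<Sum>i\<in>{1..J} - {m}. lam i / L)"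
    unfolding cond_term_def L_def by (simp add: Astar_def)
  also have "\<dots> \<le> (\<Sum>i\<in>{1..J} - {m}. lam_max2 J lam / L)"
  proof (intro sum_mono divide_right_mono)
    fix i assume "i \<in> {1..J} - {m}"
    then show "lam i \<le> lam_max2 J lam"
      using min_le_lam_max2[of i J m lam] lam_le_lam_max[of i J lam] m by (simp add: min_absorb1)
  qed (use L in simp)
  also have "\<dots> = (real J - 1) * lam_max2 J lam / L"
    using m(1) J by (simp add: card_Diff_singleton)
  finally show ?thesis using L J unfolding L_def[symmetric] by (simp add: field_simps)
qed

lemma main_sum_upper_bound:
  fixes z :: "nat \<Rightarrow> real ^ 'n"
  assumes J: "1 \<le> J" and pos: "\<forall>i\<in>{1..J}. 0 < lam i" and D: "1 \<le> Dexp CARD('n)"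
  shows "main_sum k0 kinf iota z J lam
           \<le> (\<Sum>i\<in>{1..J}. \<Sum>j\<in>{1..J}. \<bar>Astar k0 kinf iota z i j\<bar>)\<^sup>2
              * lam_max J lam powr (4 * Dexp CARD('n) - 2)"
proof -
  obtain m where "m \<in> {1..J}" "lam m = lam_max J lam"
    using lam_max_attained J by blast
  then have "0 < lam_max J lam" using pos by metis
  then show ?thesis
    unfolding main_sum_def using pos lam_le_lam_max D
    by (intro weighted_row_sums_upper_bound) (auto intro: less_imp_le)
qed

lemma main_sum_lower_bound:
  fixes z :: "nat \<Rightarrow> real ^ 'n"
  assumes J: "1 \<le> J" and D: "1 \<le> Dexp CARD('n)" and d: "0 < d"
  shows "\<exists>c>0. \<forall>lam. (\<forall>i\<in>{1..J}. 0 < lam i) \<and> d \<le> cond_min k0 kinf iota z J lam \<longrightarrow>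
           c * lam_max J lam powr (4 * Dexp CARD('n) - 2) \<le> main_sum k0 kinf iota z J lam"
proof -
  define M where "M = (\<Sum>i\<in>{1..J}. \<Sum>j\<in>{1..J}. \<bar>Astar k0 kinf iota z i j\<bar>)"
  define eps where "eps = min 1 (d / (4 * (real (card {1..J}) + M)))"
  have "0 \<le> M" unfolding M_def by (intro sum_nonneg) auto
  then have "0 < eps" unfolding eps_def using J d by auto
  show ?thesis
  proof (intro exI[of _ "d\<^sup>2 / 4 * eps powr (2 * Dexp CARD('n) - 2)"] conjI allI impI)
    show "0 < d\<^sup>2 / 4 * eps powr (2 * Dexp CARD('n) - 2)" using d \<open>0 < eps\<close> by simp
    fix lam assume lam: "(\<forall>i\<in>{1..J}. 0 < lam i) \<and> d \<le> cond_min k0 kinf iota z J lam"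
    obtain m where "m \<in> {1..J}" "lam m = lam_max J lam"
      using lam_max_attained J by blast
    then show "d\<^sup>2 / 4 * eps powr (2 * Dexp CARD('n) - 2) * lam_max J lam powr (4 * Dexp CARD('n) - 2)
                 \<le> main_sum k0 kinf iota z J lam"
      unfolding main_sum_def eps_def M_def
    proof (rule weighted_row_sums_lower_bound[OF finite_atLeastAtMost])
      show "\<forall>i\<in>{1..J}. 0 < lam i \<and> lam i \<le> lam_max J lam" using lam lam_le_lam_max by blast
      fix I assume "I \<subseteq> {1..J}" "I \<noteq> {}"
      then have "d \<le> cond_term k0 kinf iota z J lam I"
        using lam cond_min_le_cond_term[of I J] by (meson order_trans)
      then show "d \<le> L2_set (\<lambda>i. \<Sum>j\<in>I. Astar k0 kinf iota z i j * lam j powr Dexp CARD('n)) I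
                      / L2_set (\<lambda>i. lam i powr Dexp CARD('n)) I + (\<Sum>i\<in>{1..J} - I. lam i / lam_max J lam)"
        unfolding cond_term_def .
    qed (use D d in auto)
  qed
qed

lemma main_sum_comparable:
  fixes z :: "nat \<Rightarrow> real ^ 'n"
  assumes J: "1 \<le> J" and D: "1 \<le> Dexp CARD('n)" and d: "0 < d"
  shows "\<exists>C>0. \<forall>lam. (\<forall>i\<in>{1..J}. 0 < lam i) \<and> d \<le> cond_min k0 kinf iota z J lam \<longrightarrow>
           lam_max J lam powr (4 * Dexp CARD('n) - 2) / C \<le> main_sum k0 kinf iota z J lam \<and>
           main_sum k0 kinf iota z J lam \<le> C * lam_max J lam powr (4 * Dexp CARD('n) - 2)"
proof -
  define K where "K = (\<Sum>i\<in>{1..J}. \<Sum>j\<in>{1..J}. \<bar>Astar k0 kinf iota z i j\<bar>)\<^sup>2"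
  obtain c where c: "0 < c" and lower: "\<forall>lam. (\<forall>i\<in>{1..J}. 0 < lam i) \<and> d \<le> cond_min k0 kinf iota z J lam
      \<longrightarrow> c * lam_max J lam powr (4 * Dexp CARD('n) - 2) \<le> main_sum k0 kinf iota z J lam"
    using main_sum_lower_bound[OF J D d] by blast
  define C where "C = max K (1 / c)"
  have C: "0 < C" "K \<le> C" using c unfolding C_def by (auto simp: less_max_iff_disj)
  have "1 \<le> C * c" using mult_right_mono[of "1 / c" C c] c unfolding C_def by simp
  show ?thesis
  proof (intro exI[of _ C] conjI allI impI)
    fix lam assume lam: "(\<forall>i\<in>{1..J}. 0 < lam i) \<and> d \<le> cond_min k0 kinf iota z J lam"
    define P where "P = lam_max J lam powr (4 * Dexp CARD('n) - 2)"
    have "P \<le> C * c * P" using mult_right_mono[OF \<open>1 \<le> C * c\<close>, of P] by (simp add: P_def)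
    then have "P / C \<le> c * P" using C(1) by (simp add: divide_le_eq algebra_simps)
    moreover have "c * P \<le> main_sum k0 kinf iota z J lam" using lower lam unfolding P_def by blast
    ultimately show "P / C \<le> main_sum k0 kinf iota z J lam" by linarith
    have "K * P \<le> C * P" using C by (simp add: P_def mult_right_mono)
    moreover have "main_sum k0 kinf iota z J lam \<le> K * P"
      using main_sum_upper_bound[OF J _ D] lam unfolding K_def P_def by blast
    ultimately show "main_sum k0 kinf iota z J lam \<le> C * P" by linarith
  qed (use C in auto)
qed

theorem lemma4p2:
  fixes z :: "nat \<Rightarrow> real ^ 'n" and iota :: "nat \<Rightarrow> real"
    and k0 kinf :: real and J :: nat
  assumes N7: "CARD('n) \<ge> 7"
    and J2: "J \<ge> 2"
    and k0: "k0 > 0" and kinf: "kinf > 0"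
    and signs: "\<forall>i\<in>{1..J}. iota i = 1 \<or> iota i = -1"
    and distinct: "inj_on z {1..J}"
  shows "(\<forall>\<delta>1>0. \<exists>C>0. \<forall>lam :: nat \<Rightarrow> real.
            (\<forall>i\<in>{1..J}. lam i > 0) \<and> cond_min k0 kinf iota z J lam \<ge> \<delta>1 \<longrightarrow>
              lam_max J lam powr (4 * Dexp CARD('n) - 2) / C \<le> main_sum k0 kinf iota z J lam \<and>
              main_sum k0 kinf iota z J lam \<le> C * lam_max J lam powr (4 * Dexp CARD('n) - 2))
       \<and> (\<exists>c>0. \<forall>\<delta>1>0. \<forall>lam :: nat \<Rightarrow> real.
            (\<forall>i\<in>{1..J}. lam i > 0) \<and> cond_min k0 kinf iota z J lam \<ge> \<delta>1 \<longrightarrow>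
              lam_max2 J lam \<ge> c * \<delta>1 * lam_max J lam)"
proof (intro conjI allI impI)
  have D: "1 \<le> Dexp CARD('n)" using N7 unfolding Dexp_def by simp
  fix d :: real assume "0 < d"
  show "\<exists>C>0. \<forall>lam. (\<forall>i\<in>{1..J}. 0 < lam i) \<and> d \<le> cond_min k0 kinf iota z J lam \<longrightarrow>
      lam_max J lam powr (4 * Dexp CARD('n) - 2) / C \<le> main_sum k0 kinf iota z J lam \<and>
      main_sum k0 kinf iota z J lam \<le> C * lam_max J lam powr (4 * Dexp CARD('n) - 2)"
    by (rule main_sum_comparable[OF _ D \<open>0 < d\<close>]) (use J2 in simp)
next
  show "\<exists>c>0. \<forall>\<delta>1>0. \<forall>lam. (\<forall>i\<in>{1..J}. 0 < lam i) \<and> \<delta>1 \<le> cond_min k0 kinf iota z J lam \<longrightarrow>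
      c * \<delta>1 * lam_max J lam \<le> lam_max2 J lam"
  proof (intro exI[of _ "1 / (real J - 1)"] conjI allI impI)
    show "0 < 1 / (real J - 1)" using J2 by simp
    fix d lam assume "0 < d" "(\<forall>i\<in>{1..J}. 0 < lam i) \<and> d \<le> cond_min k0 kinf iota z J lam"
    then show "1 / (real J - 1) * d * lam_max J lam \<le> lam_max2 J lam"
      using lam_max2_lower_bound[OF J2, of lam d k0 kinf iota z] by simp
  qed
qed

end
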